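(* Let $\hat\Phi:\mathbf{Sym}\to F[[x]]$ be the (continuous) algebra homomorphism with $\hat\Phi(\mathbf h_n)=E_nx^n/n!$. Then for every composition $L$ of $n$, $\hat\Phi(\mathbf r_L)=\hat\beta(L)\,x^n/n!$, where $\hat\beta(L)$ is the number of permutations of $[n]$ with alternating descent composition $L$.
   Context: $F$ is a field of characteristic $0$. In $F\langle\langle X_1,X_2,\dots\rangle\rangle$ (noncommuting variables), $\mathbf h_n=\sum_{i_1\le\cdots\le i_n}X_{i_1}\cdots X_{i_n}$, $\mathbf h_L=\mathbf h_{L_1}\cdots\mathbf h_{L_k}$; $\mathbf{Sym}$ is the algebra of (possibly infinite) $F$-linear combinations of the $\mathbf h_L$. For a composition $L$ of $n$, $\mathbf r_L=\sum X_{i_1}\cdots X_{i_n}$ over $(i_1,\dots,i_n)$ weakly increasing within consecutive blocks of lengths $L_1,\dots,L_k$ with a strict decrease between the last index of each block and the first of the next. $E_n$: $\sum E_nx^n/n!=\sec x+\tan x$. The alternating descent composition of $\pi\in\mathfrak S_n$ with alternating descent set $\{s_1<\dots<s_k\}$ is $(s_1,s_2-s_1,\dots,n-s_k)$, where $i\in[n-1]$ is an alternating descent if $i$ odd and $\pi_i>\pi_{i+1}$, or $i$ even and $\pi_i<\pi_{i+1}$. *)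

theory Defs
  imports "HOL-Computational_Algebra.Formal_Power_Series" "HOL-Combinatorics.Permutations"
begin

text \<open>Noncommutative formal power series in variables indexed by nat
  (letter i stands for the variable X_(i+1)); a series is its coefficient function on words.\<close>
type_synonym 'a ncps = "nat list \<Rightarrow> 'a"

definition ncone :: "'a::field_char_0 ncps" where
  "ncone w = (if w = [] then 1 else 0)"

definition ncmult :: "'a::field_char_0 ncps \<Rightarrow> 'a ncps \<Rightarrow> 'a ncps" where
  "ncmult f g w = (\<Sum>k\<le>length w. f (take k w) * g (drop k w))"

definition hh :: "nat \<Rightarrow> 'a::field_char_0 ncps" where
  "hh n w = (if length w = n \<and> sorted w then 1 else 0)"

definition hL :: "nat list \<Rightarrow> 'a::field_char_0 ncps" where
  "hL L = foldr (\<lambda>k acc. ncmult (hh k) acc) L ncone"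

definition compositions :: "nat \<Rightarrow> nat list set" where
  "compositions n = {L. sum_list L = n \<and> 0 \<notin> set L}"

text \<open>(possibly infinite) linear combination of the h_L, computed coefficientwise\<close>
definition symsum :: "(nat list \<Rightarrow> 'a::field_char_0) \<Rightarrow> 'a ncps" where
  "symsum c w = (\<Sum>L\<in>compositions (length w). c L * hL L w)"

definition Sym :: "'a::field_char_0 ncps set" where
  "Sym = range symsum"

fun r_ok :: "nat list \<Rightarrow> nat list \<Rightarrow> bool" where
  "r_ok [] w = (w = [])"
| "r_ok (a # L) w = (a \<le> length w \<and> sorted (take a w) \<and> r_ok L (drop a w) \<and>
      (L \<noteq> [] \<longrightarrow> 0 < a \<and> drop a w \<noteq> [] \<and> last (take a w) > hd (drop a w)))"

definition rL :: "nat list \<Rightarrow> 'a::field_char_0 ncps" where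
  "rL L w = (if r_ok L w then 1 else 0)"

definition euler_zz :: "nat \<Rightarrow> 'a::field_char_0" where
  "euler_zz n = fact n * fps_nth (inverse (fps_cos 1) + fps_tan 1) n"

definition alt_descents :: "nat \<Rightarrow> (nat \<Rightarrow> nat) \<Rightarrow> nat set" where
  "alt_descents n \<pi> = {i\<in>{1..<n}. (odd i \<and> \<pi> i > \<pi> (Suc i)) \<or> (even i \<and> \<pi> i < \<pi> (Suc i))}"

definition comp_of_set :: "nat \<Rightarrow> nat set \<Rightarrow> nat list" where
  "comp_of_set n S = (if n = 0 then [] else
     (let s = sorted_list_of_set S in map2 (-) (s @ [n]) (0 # s)))"

definition alt_des_comp :: "nat \<Rightarrow> (nat \<Rightarrow> nat) \<Rightarrow> nat list" where
  "alt_des_comp n \<pi> = comp_of_set n (alt_descents n \<pi>)"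

definition beta_hat :: "nat list \<Rightarrow> nat" where
  "beta_hat L = card {\<pi>. \<pi> permutes {1..sum_list L} \<and> alt_des_comp (sum_list L) \<pi> = L}"

end

theory Submission
  imports Defs "HOL-Combinatorics.Multiset_Permutations"
begin

text \<open>Write \<open>S\<close> for the set of proper partial sums of \<open>L\<close>, and \<open>comp T\<close> for the composition of \<open>n\<close>
  cut at the points of \<open>T \<subseteq> {1..<n}\<close>. A word contributes to \<open>h\<^sub>K\<close> (resp. \<open>r\<^sub>L\<close>) iff its descent
  set is contained in the partial sums of \<open>K\<close> (resp. equals \<open>S\<close>), so inclusion-exclusion gives
  \<open>r\<^sub>L = \<Sum>\<^sub>T\<^sub>\<subseteq>\<^sub>S (-1)\<^bsup>|S-T|\<^esup> h\<^bsub>comp T\<^esub>\<close>, and \<open>\<Phi>\<close> maps \<open>h\<^sub>K\<close> to \<open>\<Prod>\<^sub>k E\<^sub>k/k! x\<^sup>n\<close>.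
  In the same way \<open>\<beta>(L)\<close> is an alternating sum of the numbers of permutations whose alternating
  descent set lies in \<open>T\<close>. Such a permutation is obtained by choosing the entries of each block of
  \<open>comp T\<close> and arranging each block as an alternating word of the right parity, so there are
  \<open>n! \<Prod>\<^sub>k E\<^sub>k/k!\<close> of them. That an \<open>m\<close>-set has \<open>E\<^sub>m\<close> alternating arrangements of either parity
  follows by removing the largest entry and comparing with \<open>f' = sec f = tan f + 1\<close> for
  \<open>f = sec + tan\<close>.\<close>

section \<open>Compositions and subsets of \<open>{1..<n}\<close>\<close>

fun set_of_comp :: "nat list \<Rightarrow> nat set" where
  "set_of_comp [] = {}"
| "set_of_comp (a # K) = (if K = [] then {} else insert a ((+) a ` set_of_comp K))"

fun partial_sums :: "nat \<Rightarrow> nat list \<Rightarrow> nat list" where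
  "partial_sums b [] = []"
| "partial_sums b [a] = []"
| "partial_sums b (a # c # K) = (b + a) # partial_sums (b + a) (c # K)"

definition consecutive_diffs :: "nat \<Rightarrow> nat list \<Rightarrow> nat \<Rightarrow> nat list" where
  "consecutive_diffs b s n = map2 (-) (s @ [n]) (b # s)"

lemma consecutive_diffs_Nil [simp]: "consecutive_diffs b [] n = [n - b]"
  by (simp add: consecutive_diffs_def)

lemma consecutive_diffs_Cons [simp]:
  "consecutive_diffs b (x # s) n = (x - b) # consecutive_diffs x s n"
  by (simp add: consecutive_diffs_def)

lemma comp_of_set_eq_consecutive_diffs:
  "0 < n \<Longrightarrow> comp_of_set n T = consecutive_diffs 0 (sorted_list_of_set T) n"
  by (simp add: comp_of_set_def consecutive_diffs_def Let_def)

lemma consecutive_diffs_partial_sums: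
  "K \<noteq> [] \<Longrightarrow> consecutive_diffs b (partial_sums b K) (b + sum_list K) = K"
  by (induction b K rule: partial_sums.induct) (auto simp: add.assoc)

lemma set_partial_sums: "set (partial_sums b K) = (+) b ` set_of_comp K"
  by (induction b K rule: partial_sums.induct) (auto simp: image_image add.assoc)

lemma partial_sums_increasing:
  assumes "0 \<notin> set K"
  shows "sorted_wrt (<) (partial_sums b K)"
    and "\<forall>x\<in>set (partial_sums b K). b < x \<and> x < b + sum_list K"
  using assms by (induction b K rule: partial_sums.induct) fastforce+

lemma finite_set_of_comp [simp]: "finite (set_of_comp K)"
  by (induction K) auto

lemma set_of_comp_subset: "0 \<notin> set K \<Longrightarrow> set_of_comp K \<subseteq> {1..<sum_list K}"
  using partial_sums_increasing(2)[of K 0] set_partial_sums[of 0 K] by auto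

lemma sorted_list_of_set_of_comp:
  "0 \<notin> set K \<Longrightarrow> sorted_list_of_set (set_of_comp K) = partial_sums 0 K"
  using set_partial_sums[of 0 K] partial_sums_increasing(1)[of K 0]
  by (metis image_add_0 sorted_list_of_set.idem_if_sorted_distinct strict_sorted_iff)

lemma comp_of_set_of_comp:
  assumes "0 \<notin> set K"
  shows "comp_of_set (sum_list K) (set_of_comp K) = K"
proof (cases "K = []")
  case False
  with assms have "0 < sum_list K"
    by (cases K) auto
  with False assms show ?thesis
    using consecutive_diffs_partial_sums[of K 0]
    by (simp add: comp_of_set_eq_consecutive_diffs sorted_list_of_set_of_comp)
qed (simp add: comp_of_set_def)

lemma consecutive_diffs_sorted:
  assumes "sorted_wrt (<) s" and "\<forall>x\<in>set s. b < x \<and> x < n" and "b < n"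
  shows "set_of_comp (consecutive_diffs b s n) = (\<lambda>y. y - b) ` set s
    \<and> sum_list (consecutive_diffs b s n) = n - b \<and> 0 \<notin> set (consecutive_diffs b s n)"
  using assms
proof (induction s arbitrary: b)
  case (Cons x s)
  then have "(+) (x - b) ` ((\<lambda>y. y - x) ` set s) = (\<lambda>y. y - b) ` set s"
    unfolding image_image by (intro image_cong) auto
  with Cons show ?case by (cases s) auto
qed simp

lemma
  assumes "T \<subseteq> {1..<n}"
  shows set_of_comp_of_set: "set_of_comp (comp_of_set n T) = T"
    and comp_of_set_in_compositions: "comp_of_set n T \<in> compositions n"
proof -
  have "finite T"
    using assms finite_subset by blast
  have "set_of_comp (comp_of_set n T) = T \<and> comp_of_set n T \<in> compositions n"
  proof (cases "n = 0")
    case False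
    then show ?thesis
      using consecutive_diffs_sorted[of "sorted_list_of_set T" 0 n] assms \<open>finite T\<close>
      by (force simp: comp_of_set_eq_consecutive_diffs compositions_def)
  qed (use assms in \<open>simp add: comp_of_set_def compositions_def\<close>)
  then show "set_of_comp (comp_of_set n T) = T" and "comp_of_set n T \<in> compositions n"
    by blast+
qed

lemma bij_betw_comp_of_set: "bij_betw (comp_of_set n) (Pow {1..<n}) (compositions n)"
proof (rule bij_betw_byWitness[where f' = set_of_comp])
  show "comp_of_set n ` Pow {1..<n} \<subseteq> compositions n"
    using comp_of_set_in_compositions by blast
  show "set_of_comp ` compositions n \<subseteq> Pow {1..<n}"
    using set_of_comp_subset by (auto simp: compositions_def)
qed (auto simp: compositions_def set_of_comp_of_set comp_of_set_of_comp)

lemma finite_compositions: "finite (compositions n)"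
  using bij_betw_finite[OF bij_betw_comp_of_set] by blast

lemma sum_compositions_coarser:
  fixes f :: "nat list \<Rightarrow> 'a::semiring_1"
  assumes "S \<subseteq> {1..<n}"
  shows "(\<Sum>K\<in>compositions n. of_bool (set_of_comp K \<subseteq> S) * f K) = (\<Sum>T\<in>Pow S. f (comp_of_set n T))"
proof -
  have "(\<Sum>K\<in>compositions n. of_bool (set_of_comp K \<subseteq> S) * f K) =
      (\<Sum>T\<in>Pow {1..<n}. of_bool (T \<subseteq> S) * f (comp_of_set n T))"
    by (simp add: sum.reindex_bij_betw[OF bij_betw_comp_of_set, symmetric] set_of_comp_of_set)
  also have "\<dots> = (\<Sum>T\<in>Pow {1..<n} \<inter> {T. T \<subseteq> S}. f (comp_of_set n T))"
    by simp
  also have "Pow {1..<n} \<inter> {T. T \<subseteq> S} = Pow S"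
    using assms by auto
  finally show ?thesis .
qed

lemma consecutive_diffs_snoc: "consecutive_diffs b (s @ [t]) n = consecutive_diffs b s t @ [n - t]"
  by (induction s arbitrary: b) auto

lemma comp_of_set_insert_max:
  assumes "T \<subseteq> {1..<t}" and "0 < t" and "t < n"
  shows "comp_of_set n (insert t T) = comp_of_set t T @ [n - t]"
proof -
  have "finite T"
    using assms(1) finite_subset by blast
  then have "set (sorted_list_of_set T @ [t]) = insert t T"
    and "sorted (sorted_list_of_set T @ [t])" and "distinct (sorted_list_of_set T @ [t])"
    using assms(1) by (auto simp: sorted_append less_imp_le)
  then have "sorted_list_of_set (insert t T) = sorted_list_of_set T @ [t]"
    by (metis sorted_list_of_set.idem_if_sorted_distinct)
  then show ?thesis
    using assms(2,3) by (simp add: comp_of_set_eq_consecutive_diffs consecutive_diffs_snoc)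
qed

section \<open>Descent sets\<close>

text \<open>Positions are 1-based: \<open>i\<close> compares the \<open>i\<close>-th and \<open>(i+1)\<close>-th entries, and \<open>R\<close> may
  depend on the position.\<close>
definition descents_wrt :: "(nat \<Rightarrow> 'b \<Rightarrow> 'b \<Rightarrow> bool) \<Rightarrow> 'b list \<Rightarrow> nat set" where
  "descents_wrt R xs = {i. 0 < i \<and> i < length xs \<and> R i (xs ! (i - 1)) (xs ! i)}"

lemma descents_wrt_subset: "descents_wrt R xs \<subseteq> {1..<length xs}"
  by (auto simp: descents_wrt_def)

lemma descents_wrt_bounds: "i \<in> descents_wrt R xs \<Longrightarrow> 0 < i \<and> i < length xs"
  by (simp add: descents_wrt_def)

lemma descents_wrt_append:
  "descents_wrt R (xs @ ys) = descents_wrt R xs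
     \<union> (if xs \<noteq> [] \<and> ys \<noteq> [] \<and> R (length xs) (last xs) (hd ys) then {length xs} else {})
     \<union> (+) (length xs) ` descents_wrt (\<lambda>i. R (i + length xs)) ys"
proof -
  let ?n = "length xs"
  have "i \<in> descents_wrt R (xs @ ys) \<longleftrightarrow>
    i \<in> descents_wrt R xs \<or> (i = ?n \<and> xs \<noteq> [] \<and> ys \<noteq> [] \<and> R ?n (last xs) (hd ys))
    \<or> (?n < i \<and> i - ?n \<in> descents_wrt (\<lambda>i. R (i + ?n)) ys)" for i
  proof (cases ?n i rule: linorder_cases)
    case equal
    then show ?thesis
      by (cases xs; cases ys) (auto simp: descents_wrt_def nth_append last_conv_nth)
  qed (auto simp: descents_wrt_def nth_append)
  moreover have "i \<in> (+) ?n ` descents_wrt (\<lambda>i. R (i + ?n)) ys \<longleftrightarrow>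
      ?n < i \<and> i - ?n \<in> descents_wrt (\<lambda>i. R (i + ?n)) ys" for i
    using descents_wrt_subset[of "\<lambda>i. R (i + ?n)" ys]
    by (auto intro: image_eqI[where x = "i - ?n"])
  ultimately show ?thesis
    unfolding set_eq_iff Un_iff by (metis empty_iff singleton_iff)
qed

abbreviation descents :: "'a::linorder list \<Rightarrow> nat set" where
  "descents \<equiv> descents_wrt (\<lambda>_ x y. y < x)"

lemma sorted_iff_descents_empty: "sorted xs \<longleftrightarrow> descents xs = {}"
proof -
  have "(\<forall>i. Suc i < length xs \<longrightarrow> xs ! i \<le> xs ! Suc i) \<longleftrightarrow>
      (\<forall>i. 0 < i \<and> i < length xs \<longrightarrow> xs ! (i - 1) \<le> xs ! i)"
    by (metis Suc_pred diff_Suc_1 zero_less_Suc)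
  then show ?thesis
    unfolding sorted_iff_nth_Suc descents_wrt_def Collect_empty_eq by (meson not_less)
qed

lemma descents_append:
  "descents (xs @ ys) = descents xs
     \<union> (if xs \<noteq> [] \<and> ys \<noteq> [] \<and> hd ys < last xs then {length xs} else {})
     \<union> (+) (length xs) ` descents ys"
  by (rule descents_wrt_append)

lemma descents_append_subset_iff:
  "descents (xs @ ys) \<subseteq> insert (length xs) ((+) (length xs) ` P) \<longleftrightarrow> sorted xs \<and> descents ys \<subseteq> P"
    (is "_ \<subseteq> ?Q \<longleftrightarrow> _")
proof
  assume sub: "descents (xs @ ys) \<subseteq> ?Q"
  have "descents xs \<subseteq> ?Q"
    using sub by (simp add: descents_append)
  then have "descents xs = {}"
    using descents_wrt_subset[of _ xs] by fastforce
  moreover have "descents ys \<subseteq> P"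
  proof
    fix i assume "i \<in> descents ys"
    then have "length xs + i \<in> ?Q" and "0 < i"
      using sub by (auto simp: descents_append descents_wrt_bounds)
    then show "i \<in> P"
      by auto
  qed
  ultimately show "sorted xs \<and> descents ys \<subseteq> P"
    by (simp add: sorted_iff_descents_empty)
qed (auto simp: descents_append sorted_iff_descents_empty)

lemma descents_append_eq_iff:
  assumes "0 \<notin> P"
  shows "descents (xs @ ys) = insert (length xs) ((+) (length xs) ` P) \<longleftrightarrow>
    sorted xs \<and> xs \<noteq> [] \<and> ys \<noteq> [] \<and> hd ys < last xs \<and> descents ys = P"
    (is "_ = ?Q \<longleftrightarrow> _")
proof
  assume eq: "descents (xs @ ys) = ?Q"
  then have "sorted xs \<and> descents ys \<subseteq> P"
    using descents_append_subset_iff by blast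
  moreover have "length xs \<notin> descents xs \<union> (+) (length xs) ` descents ys"
    by (auto dest: descents_wrt_bounds)
  then have "xs \<noteq> [] \<and> ys \<noteq> [] \<and> hd ys < last xs"
    using eq by (auto simp: descents_append split: if_splits)
  moreover have "P \<subseteq> descents ys"
  proof
    fix i assume "i \<in> P"
    with assms have "length xs + i \<in> descents (xs @ ys)" and "0 < i"
      using eq by (auto intro: gr0I)
    moreover have "length xs + i \<notin> descents xs"
      by (auto dest: descents_wrt_bounds)
    ultimately show "i \<in> descents ys"
      by (auto simp: descents_append split: if_splits)
  qed
  ultimately show "sorted xs \<and> xs \<noteq> [] \<and> ys \<noteq> [] \<and> hd ys < last xs \<and> descents ys = P"
    by blast
qed (auto simp: descents_append sorted_iff_descents_empty)

section \<open>The functions \<open>h\<^sub>K\<close> and \<open>r\<^sub>L\<close> as indicators of descent sets\<close>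

lemma ncmult_ncone: "ncmult f ncone = f"
proof
  fix w
  have "ncmult f ncone w = (\<Sum>k\<le>length w. if k = length w then f w else 0)"
    unfolding ncmult_def ncone_def by (intro sum.cong) auto
  then show "ncmult f ncone w = f w"
    by simp
qed

lemma ncmult_hh:
  "ncmult (hh a) g w = (if a \<le> length w \<and> sorted (take a w) then g (drop a w) else 0)"
proof -
  have "ncmult (hh a) g w =
      (\<Sum>k\<le>length w. if k = a then (if sorted (take a w) then g (drop a w) else 0) else 0)"
    unfolding ncmult_def hh_def by (intro sum.cong) (auto simp: min_def)
  then show ?thesis
    by simp
qed

lemma hL_Nil: "hL [] = ncone"
  by (simp add: hL_def)

lemma hL_Cons: "hL (a # K) = ncmult (hh a) (hL K)"
  by (simp add: hL_def)

lemma hL_eq: "hL K w = of_bool (length w = sum_list K \<and> descents w \<subseteq> set_of_comp K)"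
proof (induction K arbitrary: w)
  case Nil
  then show ?case
    by (auto simp: hL_Nil ncone_def descents_wrt_def)
next
  case (Cons a K)
  show ?case
  proof (cases "a \<le> length w")
    case True
    then have w: "w = take a w @ drop a w" and len: "length (take a w) = a"
      by simp_all
    have "descents w \<subseteq> set_of_comp (a # K) \<longleftrightarrow>
        sorted (take a w) \<and> descents (drop a w) \<subseteq> set_of_comp K"
      if "K \<noteq> []"
      using descents_append_subset_iff[of "take a w" "drop a w" "set_of_comp K"] that
      by (simp only: len flip: w) simp
    with True show ?thesis
      by (cases "K = []")
        (auto simp: hL_Cons hL_Nil ncone_def ncmult_hh Cons sorted_iff_descents_empty)
  qed (simp add: hL_Cons ncmult_hh)
qed

lemma r_ok_iff: "0 \<notin> set L \<Longrightarrow> r_ok L w \<longleftrightarrow> length w = sum_list L \<and> descents w = set_of_comp L"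
proof (induction L arbitrary: w)
  case Nil
  then show ?case
    by (auto simp: descents_wrt_def)
next
  case (Cons a L)
  show ?case
  proof (cases "a \<le> length w \<and> L \<noteq> []")
    case True
    then have w: "w = take a w @ drop a w" and len: "length (take a w) = a"
      by simp_all
    have "0 \<notin> set_of_comp L"
      using set_of_comp_subset[of L] Cons.prems by auto
    then have "descents w = set_of_comp (a # L) \<longleftrightarrow> sorted (take a w) \<and> take a w \<noteq> [] \<and>
        drop a w \<noteq> [] \<and> hd (drop a w) < last (take a w) \<and> descents (drop a w) = set_of_comp L"
      using descents_append_eq_iff[of "set_of_comp L" "take a w" "drop a w"] True
      by (simp only: len flip: w) simp
    with True Cons show ?thesis
      by auto
  qed (use Cons in \<open>auto simp: sorted_iff_descents_empty descents_wrt_def\<close>)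
qed

lemma rL_eq:
  "0 \<notin> set L \<Longrightarrow> rL L w = of_bool (length w = sum_list L \<and> descents w = set_of_comp L)"
  by (simp add: rL_def r_ok_iff)

lemma hL_in_Sym: "0 \<notin> set K \<Longrightarrow> hL K \<in> Sym"
proof -
  assume "0 \<notin> set K"
  have "hL K = symsum (\<lambda>J. of_bool (J = K))"
  proof
    fix w
    have "symsum (\<lambda>J. of_bool (J = K)) w =
        (\<Sum>J\<in>compositions (length w). if K = J then hL J w else 0)"
      unfolding symsum_def by (intro sum.cong) auto
    also have "\<dots> = of_bool (K \<in> compositions (length w)) * hL K w"
      by (simp add: finite_compositions)
    also have "\<dots> = hL K w"
      using \<open>0 \<notin> set K\<close> by (auto simp: compositions_def hL_eq)
    finally show "hL K w = symsum (\<lambda>J. of_bool (J = K)) w" ..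
  qed
  then show ?thesis
    unfolding Sym_def by blast
qed

lemma of_bool_eq_sum_Pow:
  assumes "finite S"
  shows "(of_bool (D = S) :: 'a::ring_1) = (\<Sum>T\<in>Pow S. (-1) ^ (card S - card T) * of_bool (D \<subseteq> T))"
  by (rule inclusion_exclusion_mobius[of "\<lambda>T. of_bool (D \<subseteq> T)"]) (use assms in auto)

text \<open>The coefficient of \<open>h\<^sub>K\<close> in the expansion of \<open>r\<^sub>L\<close>: nonzero exactly for the
  coarsenings \<open>K\<close> of \<open>L\<close>.\<close>
definition ribbon_coeff :: "nat list \<Rightarrow> nat list \<Rightarrow> 'a::ring_1" where
  "ribbon_coeff L K = of_bool (K \<in> compositions (sum_list L) \<and> set_of_comp K \<subseteq> set_of_comp L)
     * (-1) ^ (card (set_of_comp L) - card (set_of_comp K))"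

lemma rL_eq_symsum:
  assumes L: "0 \<notin> set L"
  shows "rL L = symsum (ribbon_coeff L)"
proof
  fix w :: "nat list"
  define n where "n = sum_list L"
  define S where "S = set_of_comp L"
  have S: "S \<subseteq> {1..<n}"
    using set_of_comp_subset[OF L] by (simp add: S_def n_def)
  show "rL L w = symsum (ribbon_coeff L) w"
  proof (cases "length w = n")
    case True
    have "symsum (ribbon_coeff L) w = (\<Sum>K\<in>compositions n. of_bool (set_of_comp K \<subseteq> S) *
        ((-1) ^ (card S - card (set_of_comp K)) * of_bool (descents w \<subseteq> set_of_comp K)))"
      unfolding symsum_def ribbon_coeff_def True
      by (intro sum.cong) (auto simp: hL_eq S_def n_def compositions_def True)
    also have "\<dots> = (\<Sum>T\<in>Pow S. (-1) ^ (card S - card T) * of_bool (descents w \<subseteq> T))"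
      using S by (auto simp: sum_compositions_coarser set_of_comp_of_set intro!: sum.cong)
    also have "\<dots> = of_bool (descents w = S)"
      by (simp add: of_bool_eq_sum_Pow S_def)
    also have "\<dots> = rL L w"
      using True L by (simp add: rL_eq S_def n_def)
    finally show ?thesis ..
  next
    case False
    then show ?thesis
      using L by (simp add: symsum_def ribbon_coeff_def rL_eq compositions_def n_def)
  qed
qed

section \<open>The series \<open>sec + tan\<close>\<close>

unbundle fps_syntax

definition sec_tan :: "'a::field_char_0 fps" where
  "sec_tan = inverse (fps_cos 1) + fps_tan 1"

lemma euler_zz_div_fact: "euler_zz n / fact n = sec_tan $ n"
  by (simp add: euler_zz_def sec_tan_def)

lemma fps_tan_eq_sin_times_sec: "fps_tan c = fps_sin c * inverse (fps_cos (c::'a::field_char_0))"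
  by (simp add: fps_tan_def fps_divide_unit)

lemma fps_deriv_sec:
  "fps_deriv (inverse (fps_cos (1::'a::field_char_0))) = fps_tan 1 * inverse (fps_cos 1)"
  by (simp add: fps_inverse_deriv fps_cos_deriv fps_tan_eq_sin_times_sec power2_eq_square mult_ac
      flip: fps_const_neg)

lemma fps_deriv_tan: "fps_deriv (fps_tan (1::'a::field_char_0)) = inverse (fps_cos 1) ^ 2"
  by (simp add: fps_tan_deriv fps_divide_unit fps_inverse_power)

lemma fps_sec_squared: "inverse (fps_cos (1::'a::field_char_0)) ^ 2 = 1 + fps_tan 1 ^ 2"
proof -
  have "inverse (fps_cos (1::'a)) * fps_cos 1 = 1"
    by (simp add: inverse_mult_eq_1)
  then have "inverse (fps_cos (1::'a)) ^ 2 * ((fps_cos 1)\<^sup>2 + (fps_sin 1)\<^sup>2) = 1 + fps_tan 1 ^ 2"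
    by (simp add: fps_tan_eq_sin_times_sec power2_eq_square algebra_simps)
  then show ?thesis
    by (simp add: fps_sin_cos_sum_of_squares)
qed

lemma fps_deriv_sec_tan:
  shows "fps_deriv sec_tan = inverse (fps_cos 1) * (sec_tan :: 'a::field_char_0 fps)"
    and "fps_deriv sec_tan = fps_tan 1 * (sec_tan :: 'a fps) + 1"
proof -
  show "fps_deriv sec_tan = inverse (fps_cos 1) * (sec_tan :: 'a fps)"
    by (simp add: sec_tan_def fps_deriv_sec fps_deriv_tan power2_eq_square algebra_simps)
  have "fps_deriv sec_tan = fps_tan 1 * inverse (fps_cos 1) + (1 + fps_tan 1 ^ 2 :: 'a fps)"
    by (simp add: sec_tan_def fps_deriv_sec fps_deriv_tan fps_sec_squared)
  then show "fps_deriv sec_tan = fps_tan 1 * (sec_tan :: 'a fps) + 1"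
    by (simp add: sec_tan_def power2_eq_square algebra_simps)
qed

lemma fps_nth_odd_eq_0_if_even:
  "f oo (fps_const (-1) * fps_X) = f \<Longrightarrow> odd k \<Longrightarrow> f $ k = (0::'a::field_char_0)"
  by (drule arg_cong[where f = "\<lambda>g. g $ k"]) simp

lemma fps_nth_even_eq_0_if_odd:
  "f oo (fps_const (-1) * fps_X) = - f \<Longrightarrow> even k \<Longrightarrow> f $ k = (0::'a::field_char_0)"
  by (drule arg_cong[where f = "\<lambda>g. g $ k"]) simp

lemma sec_compose_neg:
  "inverse (fps_cos 1) oo (fps_const (-1) * fps_X) = inverse (fps_cos (1::'a::field_char_0))"
proof -
  have "fps_cos 1 oo (fps_const (-1) * fps_X) = fps_cos (1::'a)"
    by (intro fps_ext) (simp add: fps_cos_def)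
  then show ?thesis
    by (subst fps_inverse_compose) auto
qed

lemma tan_compose_neg: "fps_tan 1 oo (fps_const (-1) * fps_X) = - fps_tan (1::'a::field_char_0)"
proof -
  have "fps_sin 1 oo (fps_const (-1) * fps_X) = - fps_sin (1::'a)"
    by (intro fps_ext) (simp add: fps_sin_def)
  then show ?thesis
    by (simp add: fps_tan_eq_sin_times_sec fps_compose_mult_distrib sec_compose_neg)
qed

lemma fps_nth_sec_tan_parity:
  shows "inverse (fps_cos 1) $ k = of_bool (even k) * (sec_tan $ k :: 'a::field_char_0)"
    and "fps_tan 1 $ k = of_bool (odd k) * (sec_tan $ k :: 'a)"
  using fps_nth_odd_eq_0_if_even[OF sec_compose_neg, of k]
    fps_nth_even_eq_0_if_odd[OF tan_compose_neg, of k]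
  by (auto simp: sec_tan_def)

lemma fps_nth_sec_tan_0 [simp]: "sec_tan $ 0 = 1"
  using fps_nth_even_eq_0_if_odd[OF tan_compose_neg, of 0] by (simp add: sec_tan_def)

text \<open>Coefficientwise, \<open>f' = sec f\<close> for odd \<open>p\<close> and \<open>f' = tan f + 1\<close> for even \<open>p\<close>; the constant \<open>1\<close>
  is why even \<open>p\<close> requires \<open>0 < n\<close>.\<close>
lemma sec_tan_recurrence:
  assumes "0 < n \<or> odd p"
  shows "of_nat (n + 1) * sec_tan $ (n + 1) =
    (\<Sum>k\<le>n. of_bool (odd (k + p)) * (sec_tan $ k * sec_tan $ (n - k)) :: 'a::field_char_0)"
proof -
  have "of_nat (n + 1) * sec_tan $ (n + 1) = (fps_deriv sec_tan $ n :: 'a)"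
    by simp
  also have "\<dots> = (\<Sum>k\<le>n. of_bool (odd (k + p)) * (sec_tan $ k * sec_tan $ (n - k)))"
  proof (cases "odd p")
    case True
    then show ?thesis
      by (simp add: fps_deriv_sec_tan(1) fps_mult_nth atLeast0AtMost fps_nth_sec_tan_parity
          mult.assoc)
  next
    case False
    with assms show ?thesis
      by (simp add: fps_deriv_sec_tan(2) fps_mult_nth atLeast0AtMost fps_nth_sec_tan_parity
          mult.assoc)
  qed
  finally show ?thesis .
qed

lemma fps_nth_sec_tan_1 [simp]: "sec_tan $ Suc 0 = 1"
  using sec_tan_recurrence[of 0 1] by simp

lemma sum_Pow_card:
  fixes g :: "nat \<Rightarrow> 'a::comm_semiring_1"
  assumes "finite W"
  shows "(\<Sum>Y\<in>Pow W. g (card Y)) = (\<Sum>k\<le>card W. of_nat (card W choose k) * g k)"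
proof -
  have "(\<Sum>Y\<in>Pow W. g (card Y)) = (\<Sum>k\<le>card W. \<Sum>Y\<in>{Y\<in>Pow W. card Y = k}. g (card Y))"
    using assms by (intro sum.group[symmetric]) (auto intro: card_mono)
  also have "\<dots> = (\<Sum>k\<le>card W. of_nat (card W choose k) * g k)"
  proof (intro sum.cong refl)
    fix k
    have "{Y\<in>Pow W. card Y = k} = {Y. Y \<subseteq> W \<and> card Y = k}"
      by auto
    then show "(\<Sum>Y\<in>{Y\<in>Pow W. card Y = k}. g (card Y)) = of_nat (card W choose k) * g k"
      using n_subsets[OF assms, of k] by simp
  qed
  finally show ?thesis .
qed

lemma sum_Pow_sec_tan_convolution:
  assumes "finite W" and "0 < card W \<or> odd p"
  shows "(\<Sum>Y\<in>Pow W. of_bool (odd (card Y + p)) * ((fact (card Y) * sec_tan $ card Y) *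
      (fact (card W - card Y) * sec_tan $ (card W - card Y)))) =
    fact (card W + 1) * (sec_tan $ (card W + 1) :: 'a::field_char_0)"
proof -
  define n where "n = card W"
  have "(\<Sum>Y\<in>Pow W. of_bool (odd (card Y + p)) * ((fact (card Y) * sec_tan $ card Y) *
      (fact (n - card Y) * sec_tan $ (n - card Y)))) =
      (\<Sum>k\<le>n. of_nat (n choose k) *
        (of_bool (odd (k + p)) *
          ((fact k * sec_tan $ k) * (fact (n - k) * (sec_tan $ (n - k) :: 'a)))))"
    using sum_Pow_card[OF assms(1), of "\<lambda>k. of_bool (odd (k + p)) *
      ((fact k * sec_tan $ k) * (fact (n - k) * (sec_tan $ (n - k) :: 'a)))"]
    by (simp only: n_def)
  also have "\<dots> = fact n * (\<Sum>k\<le>n. of_bool (odd (k + p)) * (sec_tan $ k * sec_tan $ (n - k)))"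
    unfolding sum_distrib_left
  proof (intro sum.cong refl)
    fix k assume "k \<in> {..n}"
    then have "of_nat (n choose k) * fact k * fact (n - k) = (fact n :: 'a)"
      by (simp add: binomial_fact)
    then show "of_nat (n choose k) *
        (of_bool (odd (k + p)) * ((fact k * sec_tan $ k) * (fact (n - k) * sec_tan $ (n - k)))) =
        fact n * (of_bool (odd (k + p)) * (sec_tan $ k * sec_tan $ (n - k)) :: 'a)"
      by (simp only: flip: \<open>_ = fact n\<close>) (simp add: mult_ac)
  qed
  also have "\<dots> = fact n * (of_nat (n + 1) * sec_tan $ (n + 1))"
    using assms(2) by (subst sec_tan_recurrence[of n p]) (simp_all add: n_def)
  also have "\<dots> = fact (n + 1) * sec_tan $ (n + 1)"
    by (simp add: mult_ac)
  finally show ?thesis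
    by (simp only: n_def)
qed

definition euler_prod :: "nat list \<Rightarrow> 'a::field_char_0" where
  "euler_prod K = (\<Prod>k\<leftarrow>K. sec_tan $ k)"

lemma euler_prod_append: "euler_prod (K @ J) = euler_prod K * euler_prod J"
  by (simp add: euler_prod_def)

lemma euler_prod_comp_of_set_empty: "euler_prod (comp_of_set n {}) = sec_tan $ n"
  by (simp add: comp_of_set_def euler_prod_def)

section \<open>The specialization \<open>\<Phi>\<close>\<close>

locale euler_specialization =
  fixes \<Phi> :: "'a::field_char_0 ncps \<Rightarrow> 'a fps"
  assumes mult: "\<forall>f\<in>Sym. \<forall>g\<in>Sym. \<Phi> (ncmult f g) = \<Phi> f * \<Phi> g"
    and one: "\<Phi> ncone = 1"
    and hval: "\<forall>m\<ge>1. \<Phi> (hh m) = fps_const (euler_zz m / fact m) * fps_X ^ m"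
    and cont: "\<forall>c. \<Phi> (symsum c) = Abs_fps (\<lambda>m. \<Sum>K\<in>compositions m. c K * \<Phi> (hL K) $ m)"
begin

lemma Phi_hL: "0 \<notin> set K \<Longrightarrow> \<Phi> (hL K) = fps_const (euler_prod K) * fps_X ^ sum_list K"
proof (induction K)
  case Nil
  then show ?case
    by (simp add: hL_Nil one euler_prod_def)
next
  case (Cons a K)
  then have "hh a \<in> Sym" and "hL K \<in> Sym" and "1 \<le> a"
    using hL_in_Sym[of "[a]"] hL_in_Sym[of K] by (auto simp: hL_Cons hL_Nil ncmult_ncone)
  then have "\<Phi> (hL (a # K)) = \<Phi> (hh a) * \<Phi> (hL K)"
    using mult by (simp only: hL_Cons) blast
  also have "\<dots> = fps_const (sec_tan $ a) * fps_X ^ a *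
      (fps_const (euler_prod K) * fps_X ^ sum_list K)"
    using hval \<open>1 \<le> a\<close> Cons by (simp add: euler_zz_div_fact)
  also have "\<dots> = fps_const (euler_prod (a # K)) * fps_X ^ sum_list (a # K)"
    by (simp add: euler_prod_def power_add mult_ac flip: fps_const_mult)
  finally show ?case .
qed

lemma Phi_rL:
  assumes L: "L \<in> compositions n"
  shows "\<Phi> (rL L) = fps_const (\<Sum>T\<in>Pow (set_of_comp L).
      (-1) ^ (card (set_of_comp L) - card T) * euler_prod (comp_of_set n T)) * fps_X ^ n"
    (is "_ = fps_const ?C * _")
proof -
  define S where "S = set_of_comp L"
  have L0: "0 \<notin> set L" and n: "sum_list L = n"
    using L by (auto simp: compositions_def)
  have S: "S \<subseteq> {1..<n}"
    using set_of_comp_subset[OF L0] by (simp add: S_def n)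
  have coeff: "(\<Sum>K\<in>compositions m. ribbon_coeff L K * \<Phi> (hL K) $ m) = of_bool (m = n) * ?C" for m
  proof (cases "m = n")
    case True
    have "(\<Sum>K\<in>compositions m. ribbon_coeff L K * \<Phi> (hL K) $ m) =
        (\<Sum>K\<in>compositions n. of_bool (set_of_comp K \<subseteq> S) *
          ((-1) ^ (card S - card (set_of_comp K)) * euler_prod K))"
      using True by (intro sum.cong) (auto simp: ribbon_coeff_def Phi_hL compositions_def S_def n)
    also have "\<dots> = ?C"
      using S by (auto simp: sum_compositions_coarser set_of_comp_of_set S_def intro!: sum.cong)
    finally show ?thesis
      using True by simp
  qed (auto simp: ribbon_coeff_def compositions_def n)
  have "\<Phi> (rL L) = Abs_fps (\<lambda>m. of_bool (m = n) * ?C)"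
    using cont coeff by (simp add: rL_eq_symsum[OF L0])
  also have "\<dots> = fps_const ?C * fps_X ^ n"
    by (intro fps_ext) simp
  finally show ?thesis .
qed

end

section \<open>Counting permutations by alternating descents\<close>

text \<open>With offset \<open>p = 0\<close> this is the alternating descent set; an offset \<open>p\<close> shifts the parity of
  all positions by \<open>p\<close>.\<close>
definition alt_descents_from :: "nat \<Rightarrow> 'a::linorder list \<Rightarrow> nat set" where
  "alt_descents_from p = descents_wrt (\<lambda>i x y. if odd (i + p) then y < x else x < y)"

lemma alt_descents_from_subset: "alt_descents_from p xs \<subseteq> {1..<length xs}"
  unfolding alt_descents_from_def by (rule descents_wrt_subset)

lemma alt_descents_from_Nil [simp]: "alt_descents_from p [] = {}"
  using alt_descents_from_subset[of p "[]"] by auto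

lemma alt_descents_from_singleton [simp]: "alt_descents_from p [x] = {}"
  using alt_descents_from_subset[of p "[x]"] by auto

lemma alt_descents_from_append:
  "alt_descents_from p (xs @ ys) = alt_descents_from p xs
     \<union> (if xs \<noteq> [] \<and> ys \<noteq> [] \<and> (if odd (length xs + p) then hd ys < last xs else last xs < hd ys)
        then {length xs} else {})
     \<union> (+) (length xs) ` alt_descents_from (p + length xs) ys"
  unfolding alt_descents_from_def descents_wrt_append by (simp add: ac_simps)

lemma alt_descents_from_append_subset_iff:
  assumes "T \<subseteq> {1..<length xs}"
  shows "alt_descents_from p (xs @ ys) \<subseteq> insert (length xs) T \<longleftrightarrow>
    alt_descents_from p xs \<subseteq> T \<and> alt_descents_from (p + length xs) ys = {}"
proof -
  let ?A = "alt_descents_from p xs" and ?B = "alt_descents_from (p + length xs) ys"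
  obtain M where split: "alt_descents_from p (xs @ ys) = ?A \<union> M \<union> (+) (length xs) ` ?B"
    and M: "M \<subseteq> {length xs}"
    by (rule that[OF alt_descents_from_append]) simp
  have "(+) (length xs) ` ?B \<inter> insert (length xs) T = {}"
    using assms alt_descents_from_subset[of "p + length xs" ys] by fastforce
  moreover have "?A \<subseteq> insert (length xs) T \<longleftrightarrow> ?A \<subseteq> T"
    using alt_descents_from_subset[of p xs] by auto
  ultimately show ?thesis
    unfolding split using M by blast
qed

text \<open>Around the largest entry the word must go up and then down, which fixes the parity of its
  position.\<close>
lemma alt_descents_from_insert_max_eq_empty_iff:
  assumes "\<forall>x\<in>set ys \<union> set zs. x < m"
  shows "alt_descents_from p (ys @ m # zs) = {} \<longleftrightarrow>
    (ys \<noteq> [] \<or> zs \<noteq> [] \<longrightarrow> odd (length ys + p)) \<and>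
    alt_descents_from p ys = {} \<and> alt_descents_from (p + length ys + 1) zs = {}"
proof -
  have "last ys < m" if "ys \<noteq> []"
    using assms that by auto
  moreover have "hd zs < m" if "zs \<noteq> []"
    using assms that by auto
  ultimately show ?thesis
    using alt_descents_from_append[of p ys "[m] @ zs"]
      alt_descents_from_append[of "p + length ys" "[m]" zs]
    by (auto simp: ac_simps split: if_splits)
qed

lemma sum_permutations_of_set_Sigma:
  assumes "finite A"
  shows "(\<Sum>Y\<in>A. \<Sum>ys\<in>permutations_of_set Y. \<Sum>zs\<in>permutations_of_set (V - Y). F ys zs) =
    (\<Sum>(Y, ys, zs)\<in>(SIGMA Y:A. permutations_of_set Y \<times> permutations_of_set (V - Y)). F ys zs)"
proof -
  have "(\<Sum>Y\<in>A. \<Sum>ys\<in>permutations_of_set Y. \<Sum>zs\<in>permutations_of_set (V - Y). F ys zs) =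
      (\<Sum>Y\<in>A. \<Sum>(ys, zs)\<in>permutations_of_set Y \<times> permutations_of_set (V - Y). F ys zs)"
    by (intro sum.cong refl) (rule sum.cartesian_product)
  also have "\<dots> = (\<Sum>(Y, ys, zs)\<in>(SIGMA Y:A. permutations_of_set Y \<times> permutations_of_set (V - Y)).
      F ys zs)"
    using assms by (subst sum.Sigma) (auto simp: case_prod_beta)
  finally show ?thesis .
qed

lemma sum_permutations_of_set_append:
  assumes "finite V" and "t \<le> card V"
  shows "(\<Sum>xs\<in>permutations_of_set V. F xs) = (\<Sum>Y | Y \<subseteq> V \<and> card Y = t.
    \<Sum>ys\<in>permutations_of_set Y. \<Sum>zs\<in>permutations_of_set (V - Y). F (ys @ zs))"
proof -
  let ?A = "{Y. Y \<subseteq> V \<and> card Y = t}"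
  have "(\<Sum>xs\<in>permutations_of_set V. F xs) = (\<Sum>(Y, ys, zs)\<in>(SIGMA Y:?A. permutations_of_set Y \<times>
      permutations_of_set (V - Y)). F (ys @ zs))"
  proof (rule sum.reindex_bij_witness[where j = "\<lambda>xs. (set (take t xs), take t xs, drop t xs)"
        and i = "\<lambda>(Y, ys, zs). ys @ zs"])
    fix xs assume "xs \<in> permutations_of_set V"
    then have d: "distinct xs" and s: "set xs = V"
      by (auto simp: permutations_of_set_def)
    have "card (set (take t xs)) = t"
      using distinct_card[of "take t xs"] d s assms(2) distinct_card[OF d] by simp
    moreover have "set (drop t xs) = V - set (take t xs)"
    proof -
      have "set (take t xs) \<union> set (drop t xs) = V"
        using s by (metis append_take_drop_id set_append)
      moreover have "set (take t xs) \<inter> set (drop t xs) = {}"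
        using d by (metis append_take_drop_id distinct_append)
      ultimately show ?thesis
        by blast
    qed
    ultimately show "(set (take t xs), take t xs, drop t xs) \<in>
        (SIGMA Y:?A. permutations_of_set Y \<times> permutations_of_set (V - Y))"
      using d s by (auto simp: permutations_of_set_def dest: in_set_takeD)
  next
    fix b assume "b \<in> (SIGMA Y:?A. permutations_of_set Y \<times> permutations_of_set (V - Y))"
    then obtain Y ys zs where b: "b = (Y, ys, zs)" and Y: "Y \<subseteq> V" "card Y = t"
      and ys: "set ys = Y" "distinct ys" and zs: "set zs = V - Y" "distinct zs"
      by (auto simp: permutations_of_set_def)
    have "length ys = t"
      using distinct_card[OF ys(2)] ys Y by simp
    then show "(set (take t (case b of (Y, ys, zs) \<Rightarrow> ys @ zs)),
        take t (case b of (Y, ys, zs) \<Rightarrow> ys @ zs), drop t (case b of (Y, ys, zs) \<Rightarrow> ys @ zs)) = b"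
      using b ys by simp
    show "(case b of (Y, ys, zs) \<Rightarrow> ys @ zs) \<in> permutations_of_set V"
      using b Y ys zs by (auto simp: permutations_of_set_def)
  qed auto
  also have "\<dots> = (\<Sum>Y\<in>?A. \<Sum>ys\<in>permutations_of_set Y. \<Sum>zs\<in>permutations_of_set (V - Y). F (ys @ zs))"
    using assms by (simp add: sum_permutations_of_set_Sigma)
  finally show ?thesis .
qed

lemma sum_permutations_of_set_take_drop:
  fixes f g :: "'a list \<Rightarrow> 'b::semiring_0"
  assumes "finite V" and "t \<le> card V"
  shows "(\<Sum>xs\<in>permutations_of_set V. f (take t xs) * g (drop t xs)) =
    (\<Sum>Y | Y \<subseteq> V \<and> card Y = t.
      (\<Sum>ys\<in>permutations_of_set Y. f ys) * (\<Sum>zs\<in>permutations_of_set (V - Y). g zs))"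
proof -
  have "(\<Sum>xs\<in>permutations_of_set V. f (take t xs) * g (drop t xs)) =
      (\<Sum>Y | Y \<subseteq> V \<and> card Y = t.
        \<Sum>ys\<in>permutations_of_set Y. \<Sum>zs\<in>permutations_of_set (V - Y). f ys * g zs)"
    unfolding sum_permutations_of_set_append[OF assms]
    by (intro sum.cong refl) (auto simp: permutations_of_set_def distinct_card[symmetric])
  then show ?thesis
    by (simp only: sum_product)
qed

lemma sum_permutations_of_set_insert:
  assumes "finite W" and "m \<notin> W"
  shows "(\<Sum>xs\<in>permutations_of_set (insert m W). F xs) = (\<Sum>Y\<in>Pow W.
    \<Sum>ys\<in>permutations_of_set Y. \<Sum>zs\<in>permutations_of_set (W - Y). F (ys @ m # zs))"
proof -
  let ?P = "\<lambda>x. x \<noteq> m"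
  have "(\<Sum>xs\<in>permutations_of_set (insert m W). F xs) = (\<Sum>(Y, ys, zs)\<in>(SIGMA Y:Pow W.
      permutations_of_set Y \<times> permutations_of_set (W - Y)). F (ys @ m # zs))"
  proof (rule sum.reindex_bij_witness[where
        j = "\<lambda>xs. (set (takeWhile ?P xs), takeWhile ?P xs, tl (dropWhile ?P xs))"
        and i = "\<lambda>(Y, ys, zs). ys @ m # zs"])
    fix xs assume "xs \<in> permutations_of_set (insert m W)"
    then have d: "distinct xs" and s: "set xs = insert m W"
      by (auto simp: permutations_of_set_def)
    have "dropWhile ?P xs \<noteq> []"
      using s by (simp add: dropWhile_eq_Nil_conv)
    moreover have "hd (dropWhile ?P xs) = m"
      using hd_dropWhile[OF calculation] by simp
    ultimately have split: "xs = takeWhile ?P xs @ m # tl (dropWhile ?P xs)"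
      using takeWhile_dropWhile_id[of ?P xs] by (metis list.collapse)
    then show "(case (set (takeWhile ?P xs), takeWhile ?P xs, tl (dropWhile ?P xs)) of
        (Y, ys, zs) \<Rightarrow> ys @ m # zs) = xs"
      and "(case (set (takeWhile ?P xs), takeWhile ?P xs, tl (dropWhile ?P xs)) of
        (Y, ys, zs) \<Rightarrow> F (ys @ m # zs)) = F xs"
      by simp_all
    have "distinct (takeWhile ?P xs @ m # tl (dropWhile ?P xs))"
      using d split by metis
    moreover have "set (takeWhile ?P xs @ m # tl (dropWhile ?P xs)) = insert m W"
      using s split by metis
    moreover have "m \<notin> set (takeWhile ?P xs)"
      by (auto dest: set_takeWhileD)
    ultimately show "(set (takeWhile ?P xs), takeWhile ?P xs, tl (dropWhile ?P xs)) \<in>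
        (SIGMA Y:Pow W. permutations_of_set Y \<times> permutations_of_set (W - Y))"
      using assms(2) by (auto simp: permutations_of_set_def)
  next
    fix b assume "b \<in> (SIGMA Y:Pow W. permutations_of_set Y \<times> permutations_of_set (W - Y))"
    then obtain Y ys zs where b: "b = (Y, ys, zs)" and Y: "Y \<subseteq> W"
      and ys: "set ys = Y" "distinct ys" and zs: "set zs = W - Y" "distinct zs"
      by (auto simp: permutations_of_set_def)
    then have "m \<notin> set ys" "m \<notin> set zs"
      using assms(2) by auto
    then have "takeWhile ?P (ys @ m # zs) = ys" and "dropWhile ?P (ys @ m # zs) = m # zs"
      by (subst takeWhile_append2 dropWhile_append2; auto)+
    then show "(set (takeWhile ?P (case b of (Y, ys, zs) \<Rightarrow> ys @ m # zs)),
        takeWhile ?P (case b of (Y, ys, zs) \<Rightarrow> ys @ m # zs),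
        tl (dropWhile ?P (case b of (Y, ys, zs) \<Rightarrow> ys @ m # zs))) = b"
      using b ys by simp
    show "(case b of (Y, ys, zs) \<Rightarrow> ys @ m # zs) \<in> permutations_of_set (insert m W)"
      using b Y ys zs \<open>m \<notin> set ys\<close> \<open>m \<notin> set zs\<close> by (auto simp: permutations_of_set_def)
  qed
  also have "\<dots> = (\<Sum>Y\<in>Pow W. \<Sum>ys\<in>permutations_of_set Y. \<Sum>zs\<in>permutations_of_set (W - Y).
      F (ys @ m # zs))"
    using assms by (simp add: sum_permutations_of_set_Sigma)
  finally show ?thesis .
qed

lemma sum_permutations_insert_max_alt_descents_empty:
  assumes "finite W" and "W \<noteq> {}" and "\<forall>x\<in>W. x < m"
  shows "(\<Sum>xs\<in>permutations_of_set (insert m W).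
      of_bool (alt_descents_from p xs = {}) :: 'a::comm_semiring_1) =
    (\<Sum>Y\<in>Pow W. of_bool (odd (card Y + p)) *
      ((\<Sum>ys\<in>permutations_of_set Y. of_bool (alt_descents_from p ys = {})) *
       (\<Sum>zs\<in>permutations_of_set (W - Y). of_bool (alt_descents_from (p + card Y + 1) zs = {}))))"
proof -
  have "m \<notin> W"
    using assms(3) by auto
  have "(\<Sum>xs\<in>permutations_of_set (insert m W). of_bool (alt_descents_from p xs = {}) :: 'a) =
      (\<Sum>Y\<in>Pow W. \<Sum>ys\<in>permutations_of_set Y. \<Sum>zs\<in>permutations_of_set (W - Y).
        of_bool (odd (card Y + p)) * (of_bool (alt_descents_from p ys = {}) *
          of_bool (alt_descents_from (p + card Y + 1) zs = {})))"
    unfolding sum_permutations_of_set_insert[OF assms(1) \<open>m \<notin> W\<close>]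
  proof (intro sum.cong refl)
    fix Y ys zs
    assume "Y \<in> Pow W" "ys \<in> permutations_of_set Y" "zs \<in> permutations_of_set (W - Y)"
    then have "length ys = card Y" and "set ys \<union> set zs = W"
      by (auto simp: permutations_of_set_def distinct_card)
    then show "of_bool (alt_descents_from p (ys @ m # zs) = {}) =
        of_bool (odd (card Y + p)) * (of_bool (alt_descents_from p ys = {}) *
          (of_bool (alt_descents_from (p + card Y + 1) zs = {}) :: 'a))"
      using alt_descents_from_insert_max_eq_empty_iff[of ys zs m p] assms(2,3) by auto
  qed
  then show ?thesis
    unfolding sum_product by (simp only: sum_distrib_left)
qed

lemma sum_permutations_alt_descents_empty:
  "finite V \<Longrightarrow> (\<Sum>xs\<in>permutations_of_set V. of_bool (alt_descents_from p xs = {})) =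
    fact (card V) * (sec_tan $ card V :: 'a::field_char_0)"
proof (induction "card V" arbitrary: V p rule: less_induct)
  case less
  show ?case
  proof (cases "card V \<le> 1")
    case True
    consider "V = {}" | m where "V = {m}"
      using True less.prems by (metis card_1_singletonE card_0_eq le_neq_implies_less less_one)
    then show ?thesis
      by cases simp_all
  next
    case False
    define m where "m = Max V"
    define W where "W = V - {m}"
    have "m \<in> V"
      using False less.prems unfolding m_def by (intro Max_in) auto
    then have V: "V = insert m W" and "m \<notin> W"
      by (auto simp: W_def)
    have W: "finite W" "\<forall>x\<in>W. x < m"
      using less.prems Max_ge[of V] by (auto simp: W_def m_def order.not_eq_order_implies_strict)
    have card_V: "card V = card W + 1"
      using W(1) \<open>m \<notin> W\<close> by (simp add: V)
    with False have "W \<noteq> {}"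
      by auto
    have IH: "(\<Sum>xs\<in>permutations_of_set U. of_bool (alt_descents_from q xs = {})) =
        fact (card U) * (sec_tan $ card U :: 'a)" if "U \<subseteq> W" for U q
      using less.hyps[of U] card_mono[OF W(1) that] finite_subset[OF that W(1)] card_V by simp
    have "(\<Sum>xs\<in>permutations_of_set V. of_bool (alt_descents_from p xs = {})) =
        (\<Sum>Y\<in>Pow W. of_bool (odd (card Y + p)) * ((fact (card Y) * sec_tan $ card Y) *
          (fact (card W - card Y) * (sec_tan $ (card W - card Y) :: 'a))))"
      unfolding V sum_permutations_insert_max_alt_descents_empty[OF W(1) \<open>W \<noteq> {}\<close> W(2)]
    proof (intro sum.cong refl)
      fix Y assume "Y \<in> Pow W"
      then have "Y \<subseteq> W" and "card (W - Y) = card W - card Y"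
        using W(1) by (auto simp: card_Diff_subset finite_subset)
      then show "of_bool (odd (card Y + p)) *
          ((\<Sum>ys\<in>permutations_of_set Y. of_bool (alt_descents_from p ys = {})) *
           (\<Sum>zs\<in>permutations_of_set (W - Y). of_bool (alt_descents_from (p + card Y + 1) zs = {}))) =
          of_bool (odd (card Y + p)) * ((fact (card Y) * sec_tan $ card Y) *
          (fact (card W - card Y) * (sec_tan $ (card W - card Y) :: 'a)))"
        by (simp only: IH[OF \<open>Y \<subseteq> W\<close>] IH[OF Diff_subset] \<open>card (W - Y) = _\<close>)
    qed
    also have "\<dots> = fact (card V) * sec_tan $ card V"
      using sum_Pow_sec_tan_convolution[OF W(1), of p] \<open>W \<noteq> {}\<close> W(1)
      by (simp add: card_V card_gt_0_iff)
    finally show ?thesis .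
  qed
qed

lemma sum_permutations_alt_descents_subset:
  assumes "finite V" and "T \<subseteq> {1..<card V}"
  shows "(\<Sum>xs\<in>permutations_of_set V. of_bool (alt_descents_from p xs \<subseteq> T)) =
    fact (card V) * (euler_prod (comp_of_set (card V) T) :: 'a::field_char_0)"
proof -
  have "finite T"
    using assms(2) finite_subset by blast
  then show ?thesis
    using assms
  proof (induction T arbitrary: V p rule: finite_linorder_max_induct)
    case empty
    then show ?case
      using sum_permutations_alt_descents_empty[of V p] by (simp add: euler_prod_comp_of_set_empty)
  next
    case (insert t T)
    define n where "n = card V"
    have T: "T \<subseteq> {1..<t}" and "0 < t" and "t \<le> card V"
      using insert.hyps(2) insert.prems(2) by auto
    have "of_bool (alt_descents_from p xs \<subseteq> insert t T) =
        of_bool (alt_descents_from p (take t xs) \<subseteq> T) *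
        (of_bool (alt_descents_from (p + t) (drop t xs) = {}) :: 'a)"
      if "xs \<in> permutations_of_set V" for xs
    proof -
      have "length (take t xs) = t"
        using that \<open>t \<le> card V\<close> by (auto simp: permutations_of_set_def distinct_card[symmetric])
      then show ?thesis
        using alt_descents_from_append_subset_iff[of T "take t xs" p "drop t xs"] T by simp
    qed
    then have "(\<Sum>xs\<in>permutations_of_set V. of_bool (alt_descents_from p xs \<subseteq> insert t T)) =
        (\<Sum>Y | Y \<subseteq> V \<and> card Y = t.
          (\<Sum>ys\<in>permutations_of_set Y. of_bool (alt_descents_from p ys \<subseteq> T)) *
          (\<Sum>zs\<in>permutations_of_set (V - Y). of_bool (alt_descents_from (p + t) zs = {})) :: 'a)"
      by (simp only: sum_permutations_of_set_take_drop[OF insert.prems(1) \<open>t \<le> card V\<close>, symmetric]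
          cong: sum.cong)
    also have "\<dots> = (\<Sum>Y | Y \<subseteq> V \<and> card Y = t.
        (fact t * euler_prod (comp_of_set t T)) * (fact (n - t) * sec_tan $ (n - t)))"
    proof (intro sum.cong refl arg_cong2[where f = "(*)"])
      fix Y assume "Y \<in> {Y. Y \<subseteq> V \<and> card Y = t}"
      then have "finite Y" "card Y = t" "card (V - Y) = n - t"
        using insert.prems(1) by (auto simp: n_def card_Diff_subset finite_subset)
      then show "(\<Sum>ys\<in>permutations_of_set Y. of_bool (alt_descents_from p ys \<subseteq> T)) =
            fact t * (euler_prod (comp_of_set t T) :: 'a)"
        and "(\<Sum>zs\<in>permutations_of_set (V - Y). of_bool (alt_descents_from (p + t) zs = {})) =
            fact (n - t) * (sec_tan $ (n - t) :: 'a)"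
        using insert.IH[of Y p] sum_permutations_alt_descents_empty[of "V - Y" "p + t"]
          T insert.prems(1)
        by simp_all
    qed
    also have "\<dots> = of_nat (n choose t) *
        ((fact t * euler_prod (comp_of_set t T)) * (fact (n - t) * sec_tan $ (n - t)))"
      using n_subsets[OF insert.prems(1), of t] by (simp add: n_def)
    also have "\<dots> = fact n * euler_prod (comp_of_set n (insert t T))"
      using \<open>t \<le> card V\<close> \<open>0 < t\<close> T insert.prems(2)
      by (simp add: binomial_fact comp_of_set_insert_max euler_prod_append euler_prod_def n_def)
    finally show ?case
      by (simp only: n_def)
  qed
qed

lemma bij_betw_permutes_permutations_of_set:
  assumes "distinct as"
  shows "bij_betw (\<lambda>\<pi>. map \<pi> as) {\<pi>. \<pi> permutes set as} (permutations_of_set (set as))"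
proof (rule bij_betw_imageI)
  show "inj_on (\<lambda>\<pi>. map \<pi> as) {\<pi>. \<pi> permutes set as}"
  proof (rule inj_onI, rule ext)
    fix \<pi> \<sigma> x
    assume "\<pi> \<in> {\<pi>. \<pi> permutes set as}" "\<sigma> \<in> {\<pi>. \<pi> permutes set as}" "map \<pi> as = map \<sigma> as"
    then show "\<pi> x = \<sigma> x"
      by (cases "x \<in> set as") (auto simp: permutes_not_in map_eq_conv)
  qed
  then have "card ((\<lambda>\<pi>. map \<pi> as) ` {\<pi>. \<pi> permutes set as}) = card (permutations_of_set (set as))"
    by (simp add: card_image card_permutations)
  moreover have "(\<lambda>\<pi>. map \<pi> as) ` {\<pi>. \<pi> permutes set as} \<subseteq> permutations_of_set (set as)"
    using assms by (auto simp: permutations_of_set_def permutes_image distinct_map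
        intro: inj_on_subset[OF permutes_inj_on])
  ultimately show "(\<lambda>\<pi>. map \<pi> as) ` {\<pi>. \<pi> permutes set as} = permutations_of_set (set as)"
    by (intro card_subset_eq) auto
qed

lemma card_permutes_filter:
  assumes "distinct as"
  shows "card {\<pi>. \<pi> permutes set as \<and> P (map \<pi> as)} =
    card {xs \<in> permutations_of_set (set as). P xs}"
proof -
  have "bij_betw (\<lambda>\<pi>. map \<pi> as) {\<pi>. \<pi> permutes set as} (permutations_of_set (set as))"
    using assms by (rule bij_betw_permutes_permutations_of_set)
  then have "bij_betw (\<lambda>\<pi>. map \<pi> as) {\<pi>. \<pi> permutes set as \<and> P (map \<pi> as)}
      {xs \<in> permutations_of_set (set as). P xs}"
    by (auto simp: bij_betw_def inj_on_def)
  then show ?thesis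
    by (rule bij_betw_same_card)
qed

lemma alt_descents_eq_alt_descents_from:
  "alt_descents n \<pi> = alt_descents_from 0 (map \<pi> [1..<n + 1])"
  by (auto simp: alt_descents_def alt_descents_from_def descents_wrt_def simp del: upt_Suc)

lemma alt_des_comp_eq_iff:
  assumes "L \<in> compositions n"
  shows "alt_des_comp n \<pi> = L \<longleftrightarrow> alt_descents n \<pi> = set_of_comp L"
proof -
  have "alt_descents n \<pi> \<subseteq> {1..<n}"
    by (auto simp: alt_descents_def)
  moreover have "comp_of_set n (set_of_comp L) = L"
    using assms comp_of_set_of_comp by (auto simp: compositions_def)
  ultimately show ?thesis
    unfolding alt_des_comp_def by (metis set_of_comp_of_set)
qed

lemma of_nat_beta_hat:
  assumes L: "L \<in> compositions n"
  shows "(of_nat (beta_hat L) :: 'a::field_char_0) = fact n * (\<Sum>T\<in>Pow (set_of_comp L).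
    (-1) ^ (card (set_of_comp L) - card T) * euler_prod (comp_of_set n T))"
proof -
  define S where "S = set_of_comp L"
  have S: "S \<subseteq> {1..<n}"
    using L set_of_comp_subset by (auto simp: S_def compositions_def)
  have set_upt: "set [1..<n + 1] = {1..n}"
    by auto
  have "beta_hat L = card {\<pi>. \<pi> permutes {1..n} \<and> alt_descents_from 0 (map \<pi> [1..<n + 1]) = S}"
    using L by (simp add: beta_hat_def compositions_def alt_des_comp_eq_iff S_def
        alt_descents_eq_alt_descents_from)
  also have "\<dots> = card {xs \<in> permutations_of_set {1..n}. alt_descents_from 0 xs = S}"
    using card_permutes_filter[of "[1..<n + 1]" "\<lambda>xs. alt_descents_from 0 xs = S"]
    by (simp only: set_upt distinct_upt simp_thms)
  finally have "(of_nat (beta_hat L) :: 'a) =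
      (\<Sum>xs\<in>permutations_of_set {1..n}. of_bool (alt_descents_from 0 xs = S))"
    by (simp add: Int_def)
  also have "\<dots> = (\<Sum>xs\<in>permutations_of_set {1..n}. \<Sum>T\<in>Pow S.
      (-1) ^ (card S - card T) * of_bool (alt_descents_from 0 xs \<subseteq> T))"
    using S by (intro sum.cong refl of_bool_eq_sum_Pow) (simp add: finite_subset)
  also have "\<dots> = (\<Sum>T\<in>Pow S. (-1) ^ (card S - card T) *
      (\<Sum>xs\<in>permutations_of_set {1..n}. of_bool (alt_descents_from 0 xs \<subseteq> T)))"
    by (subst sum.swap) (simp only: sum_distrib_left)
  also have "\<dots> = (\<Sum>T\<in>Pow S. (-1) ^ (card S - card T) * (fact n * euler_prod (comp_of_set n T)))"
  proof (intro sum.cong refl arg_cong[where f = "\<lambda>x. _ * x"])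
    fix T assume "T \<in> Pow S"
    then have "T \<subseteq> {1..<card {1..n}}"
      using S by auto
    from sum_permutations_alt_descents_subset[OF finite_atLeastAtMost this, of 0]
    show "(\<Sum>xs\<in>permutations_of_set {1..n}. of_bool (alt_descents_from 0 xs \<subseteq> T)) =
        fact n * (euler_prod (comp_of_set n T) :: 'a)"
      by simp
  qed
  finally show ?thesis
    by (simp add: sum_distrib_left mult_ac S_def)
qed

theorem lemma10:
  fixes \<Phi> :: "'a::field_char_0 ncps \<Rightarrow> 'a fps" and L :: "nat list" and n :: nat
  assumes mult: "\<forall>f\<in>Sym. \<forall>g\<in>Sym. \<Phi> (ncmult f g) = \<Phi> f * \<Phi> g"
    and one: "\<Phi> ncone = 1"
    and hval: "\<forall>m\<ge>1. \<Phi> (hh m) = fps_const (euler_zz m / fact m) * fps_X ^ m"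
    and cont: "\<forall>c. \<Phi> (symsum c) = Abs_fps (\<lambda>m. \<Sum>K\<in>compositions m. c K * fps_nth (\<Phi> (hL K)) m)"
    and L: "L \<in> compositions n"
  shows "\<Phi> (rL L) = fps_const (of_nat (beta_hat L) / fact n) * fps_X ^ n"
proof -
  interpret euler_specialization \<Phi>
    using assms by unfold_locales auto
  show ?thesis
    using Phi_rL[OF L] of_nat_beta_hat[OF L, where 'a = 'a] by simp
qed

end
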